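(* Let $X$ be an algebraic variety and $Z\subset X$ a Zariski closed subset. Then for every $s\in\mathcal{S}(X)$, the restriction $s|_Z$ belongs to $\mathcal{S}(Z)$.
   Context: An affine algebraic variety is a topological space with a sheaf of real-valued functions isomorphic as a ringed space (via a "closed embedding" $i$) to an algebraic set $Y\subset\mathbb{R}^n$ (common zero locus of real polynomials) with its Zariski topology and sheaf of regular functions. An algebraic variety is a topological space with a sheaf of real-valued functions admitting a finite open cover by affine algebraic varieties; Zariski open and Zariski closed subsets of algebraic varieties (with the induced structure) are algebraic varieties, and Zariski open/closed subsets of affine ones are affine. For an algebraic set $Y\subset\mathbb{R}^n$, $\mathcal{S}(Y)$ is the space of restrictions to $Y$ of classical Schwartz functions on $\mathbb{R}^n$; for affine $X$, $\mathcal{S}(X)=\{f:f\circ i^{-1}\in\mathcal{S}(i(X))\}$ (independent of $i$). For a general algebraic variety $X$ with a finite affine open cover $X=\bigcup_{i=1}^kX_i$, $\mathcal{S}(X)$ is the set of functions of the form $\sum_{i=1}^k\mathrm{Ext}_{X_i}^X(s_i)$ with $s_i\in\mathcal{S}(X_i)$ and $\mathrm{Ext}$ denoting extension by zero (this is independent of the cover). *)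

theory Defs
  imports "HOL-Analysis.Analysis"
begin

text \<open>R^n is modelled as the functions nat => real vanishing at all indices >= n.\<close>
definition Rn :: "nat \<Rightarrow> (nat \<Rightarrow> real) set" where
  "Rn n = {x. \<forall>i\<ge>n. x i = 0}"

inductive_set polyfun :: "nat \<Rightarrow> ((nat \<Rightarrow> real) \<Rightarrow> real) set" for n :: nat where
  pf_const: "(\<lambda>x. c) \<in> polyfun n"
| pf_coord: "i < n \<Longrightarrow> (\<lambda>x. x i) \<in> polyfun n"
| pf_add: "p \<in> polyfun n \<Longrightarrow> q \<in> polyfun n \<Longrightarrow> (\<lambda>x. p x + q x) \<in> polyfun n"
| pf_mult: "p \<in> polyfun n \<Longrightarrow> q \<in> polyfun n \<Longrightarrow> (\<lambda>x. p x * q x) \<in> polyfun n"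

definition zero_locus :: "nat \<Rightarrow> ((nat \<Rightarrow> real) \<Rightarrow> real) set \<Rightarrow> (nat \<Rightarrow> real) set" where
  "zero_locus n P = {x \<in> Rn n. \<forall>p\<in>P. p x = 0}"

definition algebraic_set :: "nat \<Rightarrow> (nat \<Rightarrow> real) set \<Rightarrow> bool" where
  "algebraic_set n Y \<longleftrightarrow> (\<exists>P. P \<subseteq> polyfun n \<and> Y = zero_locus n P)"

definition zariski :: "nat \<Rightarrow> (nat \<Rightarrow> real) set \<Rightarrow> (nat \<Rightarrow> real) topology" where
  "zariski n Y = topology (\<lambda>U. U \<subseteq> Y \<and> (\<exists>P. P \<subseteq> polyfun n \<and> Y - U = Y \<inter> zero_locus n P))"

definition regular :: "nat \<Rightarrow> (nat \<Rightarrow> real) set \<Rightarrow> (nat \<Rightarrow> real) set \<Rightarrow> ((nat \<Rightarrow> real) \<Rightarrow> real) \<Rightarrow> bool" where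
  "regular n Y U f \<longleftrightarrow> openin (zariski n Y) U \<and>
     (\<forall>x\<in>U. \<exists>V p q. openin (zariski n Y) V \<and> x \<in> V \<and> V \<subseteq> U \<and> p \<in> polyfun n \<and> q \<in> polyfun n \<and>
        (\<forall>y\<in>V. q y \<noteq> 0 \<and> f y = p y / q y))"

definition pd :: "nat \<Rightarrow> ((nat \<Rightarrow> real) \<Rightarrow> real) \<Rightarrow> (nat \<Rightarrow> real) \<Rightarrow> real" where
  "pd i g x = deriv (\<lambda>t. g (x(i := t))) (x i)"

fun diter :: "nat list \<Rightarrow> ((nat \<Rightarrow> real) \<Rightarrow> real) \<Rightarrow> (nat \<Rightarrow> real) \<Rightarrow> real" where
  "diter [] g = g"
| "diter (i # is) g = pd i (diter is g)"

definition smooth_Rn :: "nat \<Rightarrow> ((nat \<Rightarrow> real) \<Rightarrow> real) \<Rightarrow> bool" where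
  "smooth_Rn n g \<longleftrightarrow> (\<forall>is. set is \<subseteq> {..<n} \<longrightarrow>
      continuous_on (Rn n) (diter is g) \<and>
      (\<forall>i<n. \<forall>x\<in>Rn n. (\<lambda>t. diter is g (x(i := t))) field_differentiable (at (x i))))"

definition schwartz_Rn :: "nat \<Rightarrow> ((nat \<Rightarrow> real) \<Rightarrow> real) \<Rightarrow> bool" where
  "schwartz_Rn n g \<longleftrightarrow> smooth_Rn n g \<and>
     (\<forall>is js. set is \<subseteq> {..<n} \<longrightarrow> set js \<subseteq> {..<n} \<longrightarrow>
        (\<exists>C. \<forall>x\<in>Rn n. \<bar>prod_list (map x js) * diter is g x\<bar> \<le> C))"

text \<open>F U f means: f (through its values on U) is a section of the sheaf over the open set U.\<close>
definition sheaf_of_functions :: "'a topology \<Rightarrow> ('a set \<Rightarrow> ('a \<Rightarrow> real) \<Rightarrow> bool) \<Rightarrow> bool" where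
  "sheaf_of_functions T F \<longleftrightarrow>
     (\<forall>U f. F U f \<longrightarrow> openin T U) \<and>
     (\<forall>U f g. openin T U \<longrightarrow> (\<forall>x\<in>U. f x = g x) \<longrightarrow> F U f = F U g) \<and>
     (\<forall>U V f. openin T V \<longrightarrow> V \<subseteq> U \<longrightarrow> F U f \<longrightarrow> F V f) \<and>
     (\<forall>U f. openin T U \<longrightarrow> (\<forall>x\<in>U. \<exists>V. openin T V \<and> x \<in> V \<and> V \<subseteq> U \<and> F V f) \<longrightarrow> F U f)"

definition ringed_iso :: "'a topology \<Rightarrow> ('a set \<Rightarrow> ('a \<Rightarrow> real) \<Rightarrow> bool) \<Rightarrow>
    'b topology \<Rightarrow> ('b set \<Rightarrow> ('b \<Rightarrow> real) \<Rightarrow> bool) \<Rightarrow> ('a \<Rightarrow> 'b) \<Rightarrow> ('b \<Rightarrow> 'a) \<Rightarrow> bool" where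
  "ringed_iso T1 F1 T2 F2 \<phi> \<psi> \<longleftrightarrow> homeomorphic_maps T1 T2 \<phi> \<psi> \<and>
     (\<forall>V g. openin T2 V \<longrightarrow> (F2 V g \<longleftrightarrow> F1 (topspace T1 \<inter> \<phi> -` V) (g \<circ> \<phi>)))"

definition affine_variety :: "'a topology \<Rightarrow> ('a set \<Rightarrow> ('a \<Rightarrow> real) \<Rightarrow> bool) \<Rightarrow> bool" where
  "affine_variety T F \<longleftrightarrow> sheaf_of_functions T F \<and>
     (\<exists>n Y \<phi> \<psi>. algebraic_set n Y \<and> ringed_iso T F (zariski n Y) (regular n Y) \<phi> \<psi>)"

definition open_restrict :: "('a set \<Rightarrow> ('a \<Rightarrow> real) \<Rightarrow> bool) \<Rightarrow> 'a set \<Rightarrow> ('a set \<Rightarrow> ('a \<Rightarrow> real) \<Rightarrow> bool)" where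
  "open_restrict F U = (\<lambda>W f. W \<subseteq> U \<and> F W f)"

definition affine_open :: "'a topology \<Rightarrow> ('a set \<Rightarrow> ('a \<Rightarrow> real) \<Rightarrow> bool) \<Rightarrow> 'a set \<Rightarrow> bool" where
  "affine_open T F U \<longleftrightarrow> openin T U \<and> affine_variety (subtopology T U) (open_restrict F U)"

definition algebraic_variety :: "'a topology \<Rightarrow> ('a set \<Rightarrow> ('a \<Rightarrow> real) \<Rightarrow> bool) \<Rightarrow> bool" where
  "algebraic_variety T F \<longleftrightarrow> sheaf_of_functions T F \<and>
     (\<exists>(I::nat set) X. finite I \<and> (\<forall>k\<in>I. affine_open T F (X k)) \<and> (\<Union>k\<in>I. X k) = topspace T)"

definition induced_sheaf :: "'a topology \<Rightarrow> ('a set \<Rightarrow> ('a \<Rightarrow> real) \<Rightarrow> bool) \<Rightarrow> 'a set \<Rightarrow> ('a set \<Rightarrow> ('a \<Rightarrow> real) \<Rightarrow> bool)" where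
  "induced_sheaf T F Z = (\<lambda>W f. openin (subtopology T Z) W \<and>
     (\<forall>x\<in>W. \<exists>V g. openin T V \<and> x \<in> V \<and> F V g \<and> (\<forall>y\<in>V \<inter> W. f y = g y)))"

text \<open>Schwartz functions on an affine variety: composites with a closed embedding of restrictions
  of classical Schwartz functions (values only matter on the topspace).\<close>
definition schwartz_affine :: "'a topology \<Rightarrow> ('a set \<Rightarrow> ('a \<Rightarrow> real) \<Rightarrow> bool) \<Rightarrow> ('a \<Rightarrow> real) \<Rightarrow> bool" where
  "schwartz_affine T F f \<longleftrightarrow> (\<exists>n Y \<phi> \<psi>. algebraic_set n Y \<and> ringed_iso T F (zariski n Y) (regular n Y) \<phi> \<psi> \<and>
      (\<exists>g. schwartz_Rn n g \<and> (\<forall>x\<in>topspace T. f x = g (\<phi> x))))"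

definition ext0 :: "'a set \<Rightarrow> ('a \<Rightarrow> real) \<Rightarrow> 'a \<Rightarrow> real" where
  "ext0 U s = (\<lambda>x. if x \<in> U then s x else 0)"

text \<open>S(X): sums of extensions by zero of Schwartz functions on the members of a finite affine open cover.
  Functions in S(X) are represented as functions vanishing outside the topspace.\<close>
definition schwartz :: "'a topology \<Rightarrow> ('a set \<Rightarrow> ('a \<Rightarrow> real) \<Rightarrow> bool) \<Rightarrow> ('a \<Rightarrow> real) set" where
  "schwartz T F = {f. \<exists>(I::nat set) X s. finite I \<and> (\<forall>k\<in>I. affine_open T F (X k)) \<and> (\<Union>k\<in>I. X k) = topspace T \<and>
      (\<forall>k\<in>I. schwartz_affine (subtopology T (X k)) (open_restrict F (X k)) (s k)) \<and>
      f = (\<lambda>x. \<Sum>k\<in>I. ext0 (X k) (s k) x)}"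

end

theory Submission
  imports Defs
begin

text \<open>Let \<open>U\<close> be an affine open of \<open>X\<close>, with closed embedding \<open>\<phi>\<close> onto an algebraic set
  \<open>Y \<subseteq> \<real>\<^sup>n\<close>. Then \<open>\<phi>\<close> maps \<open>U \<inter> Z\<close> homeomorphically onto \<open>\<phi>(U \<inter> Z)\<close>, which is Zariski closed in
  \<open>Y\<close> and hence algebraic; and the regular functions on \<open>\<phi>(U \<inter> Z)\<close> are exactly the local
  restrictions of regular functions on \<open>Y\<close>, which \<open>\<phi>\<close> matches with the induced structure on
  \<open>U \<inter> Z\<close>. So \<open>\<phi>\<close> is also a closed embedding of the affine open \<open>U \<inter> Z\<close> of \<open>Z\<close>, and a Schwartz
  function \<open>g \<circ> \<phi>\<close> on \<open>U\<close> restricts to the Schwartz function \<open>g \<circ> \<phi>\<close> on \<open>U \<inter> Z\<close>, with the same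
  classical Schwartz function \<open>g\<close>. Restricting an affine cover of \<open>X\<close> and the summands of
  \<open>s \<in> S(X)\<close> termwise then exhibits \<open>s|\<^sub>Z\<close> as an element of \<open>S(Z)\<close>.\<close>

subsection \<open>The Zariski topology on an algebraic set\<close>

lemma zero_locus_Un: "zero_locus n (P \<union> Q) = zero_locus n P \<inter> zero_locus n Q"
  by (auto simp: zero_locus_def)

lemma zero_locus_Un_products:
  "zero_locus n P \<union> zero_locus n Q = zero_locus n {(\<lambda>x. p x * q x) | p q. p \<in> P \<and> q \<in> Q}"
  by (auto simp: zero_locus_def) (metis mult_eq_0_iff)

lemma istopology_zariski:
  assumes "Y \<subseteq> Rn n"
  shows "istopology (\<lambda>U. U \<subseteq> Y \<and> (\<exists>P. P \<subseteq> polyfun n \<and> Y - U = Y \<inter> zero_locus n P))"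
  unfolding istopology_def
proof (rule conjI; (intro allI impI)?)
  fix S T assume "S \<subseteq> Y \<and> (\<exists>P. P \<subseteq> polyfun n \<and> Y - S = Y \<inter> zero_locus n P)"
    and "T \<subseteq> Y \<and> (\<exists>P. P \<subseteq> polyfun n \<and> Y - T = Y \<inter> zero_locus n P)"
  then obtain P Q where S: "S \<subseteq> Y" "P \<subseteq> polyfun n" "Y - S = Y \<inter> zero_locus n P"
    and T: "Q \<subseteq> polyfun n" "Y - T = Y \<inter> zero_locus n Q" by blast
  have "{(\<lambda>x. p x * q x) | p q. p \<in> P \<and> q \<in> Q} \<subseteq> polyfun n"
    using S T by (auto intro: polyfun.pf_mult)
  moreover have "Y - (S \<inter> T) = Y \<inter> zero_locus n {(\<lambda>x. p x * q x) | p q. p \<in> P \<and> q \<in> Q}"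
    using S T zero_locus_Un_products[of n P Q] by blast
  ultimately show "S \<inter> T \<subseteq> Y \<and> (\<exists>P. P \<subseteq> polyfun n \<and> Y - (S \<inter> T) = Y \<inter> zero_locus n P)"
    using S by blast
next
  fix K assume "\<forall>U\<in>K. U \<subseteq> Y \<and> (\<exists>P. P \<subseteq> polyfun n \<and> Y - U = Y \<inter> zero_locus n P)"
  then obtain P where P: "\<And>U. U \<in> K \<Longrightarrow> U \<subseteq> Y \<and> P U \<subseteq> polyfun n \<and> Y - U = Y \<inter> zero_locus n (P U)"
    by metis
  then have "Y - \<Union>K = Y \<inter> (\<Inter>U\<in>K. Y \<inter> zero_locus n (P U))"
    by blast
  also have "\<dots> = Y \<inter> zero_locus n (\<Union>U\<in>K. P U)"
    using assms by (auto simp: zero_locus_def)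
  finally have "Y - \<Union>K = Y \<inter> zero_locus n (\<Union>U\<in>K. P U)" .
  moreover have "(\<Union>U\<in>K. P U) \<subseteq> polyfun n" using P by blast
  ultimately show "\<Union>K \<subseteq> Y \<and> (\<exists>P. P \<subseteq> polyfun n \<and> Y - \<Union>K = Y \<inter> zero_locus n P)"
    using P by blast
qed

lemma openin_zariski:
  "Y \<subseteq> Rn n \<Longrightarrow>
    openin (zariski n Y) U \<longleftrightarrow> U \<subseteq> Y \<and> (\<exists>P. P \<subseteq> polyfun n \<and> Y - U = Y \<inter> zero_locus n P)"
  unfolding zariski_def using topology_inverse'[OF istopology_zariski] by simp

lemma algebraic_set_subset_Rn: "algebraic_set n Y \<Longrightarrow> Y \<subseteq> Rn n"
  by (auto simp: algebraic_set_def zero_locus_def)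

lemma topspace_zariski:
  assumes "Y \<subseteq> Rn n"
  shows "topspace (zariski n Y) = Y"
proof -
  have "zero_locus n {\<lambda>x. 1} = {}" by (auto simp: zero_locus_def)
  then have "openin (zariski n Y) Y"
    using openin_zariski[OF assms]
    by (metis Diff_cancel Int_empty_right empty_subsetI insert_subset polyfun.pf_const subset_refl)
  then show ?thesis
    using openin_subset[of "zariski n Y"] openin_zariski[OF assms]
    by (metis openin_topspace subset_antisym)
qed

lemma zariski_subset:
  assumes "Y \<subseteq> Rn n" "Y' \<subseteq> Y"
  shows "zariski n Y' = subtopology (zariski n Y) Y'"
proof (rule topology_eq[THEN iffD2], intro allI)
  fix U
  have "Y' \<subseteq> Rn n" using assms by blast
  then show "openin (zariski n Y') U = openin (subtopology (zariski n Y) Y') U"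
    unfolding openin_subtopology openin_zariski[OF assms(1)] openin_zariski[OF \<open>Y' \<subseteq> Rn n\<close>]
  proof safe
    fix P assume "U \<subseteq> Y'" "P \<subseteq> polyfun n" "Y' - U = Y' \<inter> zero_locus n P"
    then show "\<exists>T. (T \<subseteq> Y \<and> (\<exists>P. P \<subseteq> polyfun n \<and> Y - T = Y \<inter> zero_locus n P)) \<and> U = T \<inter> Y'"
      using assms by (intro exI[of _ "Y - zero_locus n P"]) blast
  next
    fix T P assume "T \<subseteq> Y" "P \<subseteq> polyfun n" "Y - T = Y \<inter> zero_locus n P"
    then show "\<exists>P. P \<subseteq> polyfun n \<and> Y' - T \<inter> Y' = Y' \<inter> zero_locus n P"
      using assms by blast
  qed
qed

lemma algebraic_set_closedin_zariski:
  assumes Y: "algebraic_set n Y" and Y': "closedin (zariski n Y) Y'"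
  shows "algebraic_set n Y'"
proof -
  have YR: "Y \<subseteq> Rn n" using Y by (rule algebraic_set_subset_Rn)
  have Y'Y: "Y' \<subseteq> Y" using closedin_subset[OF Y'] topspace_zariski[OF YR] by simp
  obtain P0 where P0: "P0 \<subseteq> polyfun n" "Y = zero_locus n P0"
    using Y algebraic_set_def by blast
  obtain P where P: "P \<subseteq> polyfun n" "Y - (Y - Y') = Y \<inter> zero_locus n P"
    using Y' unfolding closedin_def topspace_zariski[OF YR] openin_zariski[OF YR] by blast
  have "Y' = zero_locus n (P0 \<union> P)"
    using P(2) P0(2) Y'Y zero_locus_Un by blast
  then show ?thesis using P(1) P0(1) unfolding algebraic_set_def by blast
qed

lemma openin_zariski_nonzero:
  assumes "Y \<subseteq> Rn n" "q \<in> polyfun n"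
  shows "openin (zariski n Y) {y \<in> Y. q y \<noteq> 0}"
  unfolding openin_zariski[OF assms(1)]
  using assms by (intro conjI exI[of _ "{q}"]) (auto simp: zero_locus_def)

lemma regular_quotient:
  assumes "openin (zariski n Y) V" "p \<in> polyfun n" "q \<in> polyfun n" "\<forall>y\<in>V. q y \<noteq> 0"
  shows "regular n Y V (\<lambda>y. p y / q y)"
  unfolding regular_def using assms by blast

text \<open>A local quotient \<open>p / q\<close> on \<open>Y'\<close> is the restriction of the regular function \<open>p / q\<close>
  on the open subset of \<open>Y\<close> where \<open>q\<close> does not vanish.\<close>
lemma regular_imp_induced_sheaf:
  assumes Y: "Y \<subseteq> Rn n" and Y': "Y' \<subseteq> Y" and reg: "regular n Y' V g"
  shows "induced_sheaf (zariski n Y) (regular n Y) Y' V g"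
  unfolding induced_sheaf_def
proof (intro conjI ballI)
  have zY': "zariski n Y' = subtopology (zariski n Y) Y'" by (rule zariski_subset[OF Y Y'])
  have V: "openin (zariski n Y') V" using reg by (simp add: regular_def)
  then show "openin (subtopology (zariski n Y) Y') V" using zY' by simp
  have VY': "V \<subseteq> Y'" using openin_subset[OF V] topspace_zariski[of Y' n] Y Y' by auto
  fix x assume "x \<in> V"
  then obtain V2 p q where V2: "openin (zariski n Y') V2" "x \<in> V2" "V2 \<subseteq> V"
    and pq: "p \<in> polyfun n" "q \<in> polyfun n" "\<forall>y\<in>V2. q y \<noteq> 0 \<and> g y = p y / q y"
    using reg unfolding regular_def by blast
  obtain V3 where V3: "openin (zariski n Y) V3" "V2 = V3 \<inter> Y'"
    using V2(1) zY' openin_subtopology by metis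
  define V4 where "V4 = V3 \<inter> {y \<in> Y. q y \<noteq> 0}"
  have V4: "openin (zariski n Y) V4"
    unfolding V4_def using V3(1) openin_zariski_nonzero[OF Y pq(2)] by (rule openin_Int)
  then have "regular n Y V4 (\<lambda>y. p y / q y)"
    using pq(1,2) by (rule regular_quotient) (simp add: V4_def)
  moreover have "x \<in> V4" using V2(2) V3(2) Y' pq(3) by (auto simp: V4_def)
  moreover have "\<forall>y\<in>V4 \<inter> V. g y = p y / q y"
    using V3(2) pq(3) VY' by (auto simp: V4_def)
  ultimately show "\<exists>V0 g0. openin (zariski n Y) V0 \<and> x \<in> V0 \<and> regular n Y V0 g0 \<and>
      (\<forall>y\<in>V0 \<inter> V. g y = g0 y)"
    using V4 by (intro exI[of _ V4] exI[of _ "\<lambda>y. p y / q y"]) simp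
qed

lemma induced_sheaf_imp_regular:
  assumes Y: "Y \<subseteq> Rn n" and Y': "Y' \<subseteq> Y"
    and ind: "induced_sheaf (zariski n Y) (regular n Y) Y' V g"
  shows "regular n Y' V g"
  unfolding regular_def
proof (intro conjI ballI)
  have zY': "zariski n Y' = subtopology (zariski n Y) Y'" by (rule zariski_subset[OF Y Y'])
  show V: "openin (zariski n Y') V" using ind zY' by (simp add: induced_sheaf_def)
  fix x assume "x \<in> V"
  then obtain V0 g0 where "openin (zariski n Y) V0" "x \<in> V0" "regular n Y V0 g0"
    and g0: "\<forall>y\<in>V0 \<inter> V. g y = g0 y"
    using ind unfolding induced_sheaf_def by blast
  then obtain V1 p q where V1: "openin (zariski n Y) V1" "x \<in> V1" "V1 \<subseteq> V0"
    and pq: "p \<in> polyfun n" "q \<in> polyfun n" "\<forall>y\<in>V1. q y \<noteq> 0 \<and> g0 y = p y / q y"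
    unfolding regular_def by blast
  have "openin (zariski n Y') (Y' \<inter> V1 \<inter> V)"
    using V V1(1) zY' by (simp add: openin_Int openin_subtopology_Int2)
  moreover have "Y' \<inter> V1 \<inter> V = V1 \<inter> V"
    using openin_subset[OF V] topspace_zariski[of Y' n] Y Y' by auto
  moreover have "\<forall>y\<in>V1 \<inter> V. q y \<noteq> 0 \<and> g y = p y / q y" using V1(3) g0 pq(3) by auto
  ultimately show "\<exists>V2 p q. openin (zariski n Y') V2 \<and> x \<in> V2 \<and> V2 \<subseteq> V \<and>
      p \<in> polyfun n \<and> q \<in> polyfun n \<and> (\<forall>y\<in>V2. q y \<noteq> 0 \<and> g y = p y / q y)"
    using \<open>x \<in> V\<close> V1(2) pq(1,2) by blast
qed

lemma regular_eq_induced_sheaf: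
  assumes "Y \<subseteq> Rn n" "Y' \<subseteq> Y"
  shows "regular n Y' = induced_sheaf (zariski n Y) (regular n Y) Y'"
  using regular_imp_induced_sheaf[OF assms] induced_sheaf_imp_regular[OF assms] by blast

subsection \<open>Sheaves of functions and their restrictions\<close>

lemma sheaf_of_functions_cong:
  assumes "sheaf_of_functions T F" "openin T U" "\<And>x. x \<in> U \<Longrightarrow> f x = g x"
  shows "F U f = F U g"
  using assms(1)[unfolded sheaf_of_functions_def, THEN conjunct2, THEN conjunct1] assms(2,3)
  by blast

lemma sheaf_of_functions_restrict:
  assumes "sheaf_of_functions T F" "openin T V" "V \<subseteq> U" "F U f"
  shows "F V f"
  using assms(1)[unfolded sheaf_of_functions_def, THEN conjunct2, THEN conjunct2, THEN conjunct1]
    assms(2-4)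
  by blast

lemma sheaf_of_functions_induced_sheaf:
  assumes F: "sheaf_of_functions T F"
  shows "sheaf_of_functions (subtopology T Z) (induced_sheaf T F Z)"
  unfolding sheaf_of_functions_def
proof (intro conjI allI impI)
  fix U f assume "induced_sheaf T F Z U f"
  then show "openin (subtopology T Z) U" by (simp add: induced_sheaf_def)
next
  fix U and f g :: "'a \<Rightarrow> real" assume "\<forall>x\<in>U. f x = g x"
  then show "induced_sheaf T F Z U f = induced_sheaf T F Z U g"
    unfolding induced_sheaf_def by (metis IntD2)
next
  fix U V f assume "openin (subtopology T Z) V" "V \<subseteq> U" "induced_sheaf T F Z U f"
  then show "induced_sheaf T F Z V f"
    unfolding induced_sheaf_def by blast
next
  fix U f
  assume U: "openin (subtopology T Z) U"
    and loc: "\<forall>x\<in>U. \<exists>V. openin (subtopology T Z) V \<and> x \<in> V \<and> V \<subseteq> U \<and> induced_sheaf T F Z V f"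
  show "induced_sheaf T F Z U f" unfolding induced_sheaf_def
  proof (intro conjI U ballI)
    fix x assume "x \<in> U"
    then obtain V where V: "openin (subtopology T Z) V" "x \<in> V" "V \<subseteq> U" "induced_sheaf T F Z V f"
      using loc by blast
    then obtain V0 g where V0: "openin T V0" "x \<in> V0" "F V0 g" "\<forall>y\<in>V0 \<inter> V. f y = g y"
      unfolding induced_sheaf_def by blast
    obtain Ob where Ob: "openin T Ob" "V = Ob \<inter> Z" using V(1) by (auto simp: openin_subtopology)
    have "openin T (V0 \<inter> Ob)" using V0(1) Ob(1) by blast
    moreover have "F (V0 \<inter> Ob) g" using sheaf_of_functions_restrict[OF F calculation _ V0(3)] by blast
    moreover have "\<forall>y\<in>(V0 \<inter> Ob) \<inter> U. f y = g y"
      using V0(4) Ob(2) U openin_subset by fastforce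
    ultimately show "\<exists>V g. openin T V \<and> x \<in> V \<and> F V g \<and> (\<forall>y\<in>V \<inter> U. f y = g y)"
      using V(2) V0(2) Ob(2) by blast
  qed
qed

lemma openin_subtopology_Int_openin:
  assumes "openin T A"
  shows "openin (subtopology T (A \<inter> Z)) W \<longleftrightarrow> openin (subtopology T Z) W \<and> W \<subseteq> A"
proof
  assume "openin (subtopology T (A \<inter> Z)) W"
  then obtain U where "openin T U" "W = U \<inter> (A \<inter> Z)" by (auto simp: openin_subtopology)
  then show "openin (subtopology T Z) W \<and> W \<subseteq> A"
    using assms by (auto simp: openin_subtopology intro!: exI[of _ "U \<inter> A"])
next
  assume "openin (subtopology T Z) W \<and> W \<subseteq> A"
  then obtain U where "openin T U" "W = U \<inter> Z" "W \<subseteq> A" by (auto simp: openin_subtopology)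
  then show "openin (subtopology T (A \<inter> Z)) W"
    by (auto simp: openin_subtopology intro!: exI[of _ U])
qed

lemma open_restrict_induced_sheaf:
  assumes F: "sheaf_of_functions T F" and A: "openin T A"
  shows "open_restrict (induced_sheaf T F Z) (A \<inter> Z) = induced_sheaf (subtopology T A) (open_restrict F A) (A \<inter> Z)"
proof (intro ext)
  fix W f
  define germ_T where
    "germ_T = (\<lambda>x. \<exists>V g. openin T V \<and> x \<in> V \<and> F V g \<and> (\<forall>y\<in>V \<inter> W. f y = g y))"
  define germ_A where
    "germ_A = (\<lambda>x. \<exists>V g. openin (subtopology T A) V \<and> x \<in> V \<and> (V \<subseteq> A \<and> F V g) \<and>
      (\<forall>y\<in>V \<inter> W. f y = g y))"
  have germ_eq: "germ_T x \<longleftrightarrow> germ_A x" if "x \<in> A" for x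
  proof
    assume "germ_T x"
    then obtain V g where V: "openin T V" "x \<in> V" "F V g" "\<forall>y\<in>V \<inter> W. f y = g y"
      unfolding germ_T_def by blast
    have "openin T (V \<inter> A)" using V(1) A by blast
    then have "F (V \<inter> A) g" using sheaf_of_functions_restrict[OF F _ _ V(3)] by blast
    then show "germ_A x" unfolding germ_A_def
      using \<open>openin T (V \<inter> A)\<close> V(2,4) that
      by (intro exI[of _ "V \<inter> A"] exI[of _ g]) (auto simp: openin_open_subtopology[OF A])
  next
    assume "germ_A x"
    then show "germ_T x" unfolding germ_T_def germ_A_def using openin_trans_full[OF _ A] by blast
  qed
  have opens: "W \<subseteq> A \<inter> Z \<and> openin (subtopology T Z) W \<longleftrightarrow>
      openin (subtopology (subtopology T A) (A \<inter> Z)) W"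
    using openin_subtopology_Int_openin[OF A, of Z W] openin_subset[of "subtopology T Z" W]
    by (auto simp: subtopology_subtopology)
  show "open_restrict (induced_sheaf T F Z) (A \<inter> Z) W f =
      induced_sheaf (subtopology T A) (open_restrict F A) (A \<inter> Z) W f"
    unfolding open_restrict_def induced_sheaf_def germ_T_def[symmetric] germ_A_def[symmetric]
    using opens germ_eq by blast
qed

lemma ringed_iso_sections:
  "ringed_iso T1 F1 T2 F2 \<phi> \<psi> \<Longrightarrow> openin T2 V \<Longrightarrow> F2 V g \<longleftrightarrow> F1 (topspace T1 \<inter> \<phi> -` V) (g \<circ> \<phi>)"
  unfolding ringed_iso_def by auto

lemma homeomorphic_maps_openin_preimage:
  "homeomorphic_maps X Y f g \<Longrightarrow> openin Y V \<Longrightarrow> openin X (topspace X \<inter> f -` V)"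
  using openin_continuous_map_preimage[of X Y f V]
  by (simp add: homeomorphic_maps_def vimage_def Int_def)

lemma ringed_iso_pullback_induced_sheaf:
  assumes iso: "ringed_iso T1 F1 T2 F2 \<phi> \<psi>" and S: "S \<subseteq> topspace T1"
    and W: "openin (subtopology T1 S) (S \<inter> \<phi> -` V)"
    and ind: "induced_sheaf T2 F2 (\<phi> ` S) V g"
  shows "induced_sheaf T1 F1 S (S \<inter> \<phi> -` V) (g \<circ> \<phi>)"
  unfolding induced_sheaf_def
proof (intro conjI W ballI)
  have hom: "homeomorphic_maps T1 T2 \<phi> \<psi>" using iso by (simp add: ringed_iso_def)
  fix x assume x: "x \<in> S \<inter> \<phi> -` V"
  then obtain V0 g0 where V0: "openin T2 V0" "\<phi> x \<in> V0" "F2 V0 g0" "\<forall>y\<in>V0 \<inter> V. g y = g0 y"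
    using ind unfolding induced_sheaf_def by blast
  have "F1 (topspace T1 \<inter> \<phi> -` V0) (g0 \<circ> \<phi>)"
    using ringed_iso_sections[OF iso V0(1)] V0(3) by blast
  moreover have "x \<in> topspace T1 \<inter> \<phi> -` V0" using x S V0(2) by auto
  moreover have "\<forall>z\<in>(topspace T1 \<inter> \<phi> -` V0) \<inter> (S \<inter> \<phi> -` V). (g \<circ> \<phi>) z = (g0 \<circ> \<phi>) z"
    using V0(4) by auto
  ultimately show "\<exists>U h. openin T1 U \<and> x \<in> U \<and> F1 U h \<and>
      (\<forall>z\<in>U \<inter> (S \<inter> \<phi> -` V). (g \<circ> \<phi>) z = h z)"
    using homeomorphic_maps_openin_preimage[OF hom V0(1)] by blast
qed

text \<open>The candidate local section near \<open>y\<close> is \<open>h \<circ> \<psi>\<close>; that it is a section of \<open>F2\<close> uses that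
  \<open>h \<circ> \<psi> \<circ> \<phi>\<close> agrees with \<open>h\<close>, which is where the sheaf property of \<open>F1\<close> enters.\<close>
lemma ringed_iso_pushforward_induced_sheaf:
  assumes F1: "sheaf_of_functions T1 F1" and iso: "ringed_iso T1 F1 T2 F2 \<phi> \<psi>"
    and S: "S \<subseteq> topspace T1" and V: "openin (subtopology T2 (\<phi> ` S)) V"
    and ind: "induced_sheaf T1 F1 S (S \<inter> \<phi> -` V) (g \<circ> \<phi>)"
  shows "induced_sheaf T2 F2 (\<phi> ` S) V g"
  unfolding induced_sheaf_def
proof (intro conjI V ballI)
  have hom: "homeomorphic_maps T1 T2 \<phi> \<psi>" using iso by (simp add: ringed_iso_def)
  then have \<phi>: "\<And>x. x \<in> topspace T1 \<Longrightarrow> \<phi> x \<in> topspace T2 \<and> \<psi> (\<phi> x) = x"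
    and \<psi>: "\<And>y. y \<in> topspace T2 \<Longrightarrow> \<psi> y \<in> topspace T1"
    unfolding homeomorphic_maps_def continuous_map_def by auto
  have \<psi>V: "\<psi> y \<in> S \<inter> \<phi> -` V \<and> \<phi> (\<psi> y) = y" if y: "y \<in> V" for y
  proof -
    obtain x where "x \<in> S" "y = \<phi> x" using y openin_subset[OF V] by auto
    then show ?thesis using S \<phi> y by auto
  qed
  fix y assume y: "y \<in> V"
  then obtain U h where U: "openin T1 U" "\<psi> y \<in> U" "F1 U h"
      "\<forall>z\<in>U \<inter> (S \<inter> \<phi> -` V). (g \<circ> \<phi>) z = h z"
    using ind \<psi>V unfolding induced_sheaf_def by blast
  define V0 where "V0 = topspace T2 \<inter> \<psi> -` U"
  have V0: "openin T2 V0"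
    unfolding V0_def using hom U(1) by (rule homeomorphic_maps_openin_preimage[OF homeomorphic_maps_sym[THEN iffD1]])
  have "topspace T1 \<inter> \<phi> -` V0 = U"
    using openin_subset[OF U(1)] \<phi> \<psi> by (auto simp: V0_def)
  moreover have "F1 U (h \<circ> \<psi> \<circ> \<phi>) = F1 U h"
    by (rule sheaf_of_functions_cong[OF F1 U(1)]) (use openin_subset[OF U(1)] \<phi> in auto)
  ultimately have "F2 V0 (h \<circ> \<psi>)" using U(3) by (simp only: ringed_iso_sections[OF iso V0])
  moreover have "y \<in> V0"
    using y U(2) openin_subset[OF V] by (auto simp: V0_def)
  moreover have "g z = (h \<circ> \<psi>) z" if z: "z \<in> V0 \<inter> V" for z
  proof -
    have "\<psi> z \<in> U \<inter> (S \<inter> \<phi> -` V)" using \<psi>V[of z] z by (auto simp: V0_def)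
    then have "(g \<circ> \<phi>) (\<psi> z) = h (\<psi> z)" using U(4) by blast
    then show ?thesis using \<psi>V[of z] z by simp
  qed
  ultimately show "\<exists>V0 g0. openin T2 V0 \<and> y \<in> V0 \<and> F2 V0 g0 \<and> (\<forall>z\<in>V0 \<inter> V. g z = g0 z)"
    using V0 by blast
qed

lemma ringed_iso_induced_sheaf:
  assumes F1: "sheaf_of_functions T1 F1" and iso: "ringed_iso T1 F1 T2 F2 \<phi> \<psi>"
    and S: "S \<subseteq> topspace T1"
  shows "ringed_iso (subtopology T1 S) (induced_sheaf T1 F1 S)
    (subtopology T2 (\<phi> ` S)) (induced_sheaf T2 F2 (\<phi> ` S)) \<phi> \<psi>"
proof -
  have hom: "homeomorphic_maps T1 T2 \<phi> \<psi>" using iso by (simp add: ringed_iso_def)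
  have homS: "homeomorphic_maps (subtopology T1 S) (subtopology T2 (\<phi> ` S)) \<phi> \<psi>"
    by (rule homeomorphic_maps_subtopologies[OF hom])
      (use S hom in \<open>auto simp: homeomorphic_maps_def continuous_map_def\<close>)
  have tsS: "topspace (subtopology T1 S) = S" using S by auto
  have "openin (subtopology T1 S) (S \<inter> \<phi> -` V)" if "openin (subtopology T2 (\<phi> ` S)) V" for V
    using homeomorphic_maps_openin_preimage[OF homS that] tsS by simp
  then show ?thesis
    unfolding ringed_iso_def tsS
    using homS ringed_iso_pullback_induced_sheaf[OF iso S]
      ringed_iso_pushforward_induced_sheaf[OF F1 iso S] by blast
qed

subsection \<open>Closed subsets of affine opens\<close>

lemma ringed_iso_Int_closedin:
  assumes F: "sheaf_of_functions T F" and A: "openin T A" and Z: "closedin T Z"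
    and FA: "sheaf_of_functions (subtopology T A) (open_restrict F A)"
    and Y: "algebraic_set n Y"
    and iso: "ringed_iso (subtopology T A) (open_restrict F A) (zariski n Y) (regular n Y) \<phi> \<psi>"
  defines "Y' \<equiv> \<phi> ` (A \<inter> Z)"
  shows "algebraic_set n Y' \<and>
    ringed_iso (subtopology T (A \<inter> Z)) (open_restrict (induced_sheaf T F Z) (A \<inter> Z))
      (zariski n Y') (regular n Y') \<phi> \<psi>"
proof -
  have YR: "Y \<subseteq> Rn n" using Y by (rule algebraic_set_subset_Rn)
  have hom: "homeomorphic_map (subtopology T A) (zariski n Y) \<phi>"
    using iso[unfolded ringed_iso_def, THEN conjunct1] homeomorphic_maps_map by blast
  have tsA: "topspace (subtopology T A) = A" using openin_subset[OF A] by auto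
  have AZ: "A \<inter> Z \<subseteq> topspace (subtopology T A)" using tsA by blast
  have "closedin (subtopology T A) (A \<inter> Z)" using Z by (rule closedin_subtopology_Int_closed)
  then have Y'_closed: "closedin (zariski n Y) Y'"
    unfolding Y'_def using homeomorphic_map_closedness[OF hom AZ] by blast
  have Y'Y: "Y' \<subseteq> Y"
    using closedin_subset[OF Y'_closed] topspace_zariski[OF YR] by simp
  have "ringed_iso (subtopology T (A \<inter> Z)) (open_restrict (induced_sheaf T F Z) (A \<inter> Z))
      (zariski n Y') (regular n Y') \<phi> \<psi>"
    using ringed_iso_induced_sheaf[OF FA iso AZ, folded Y'_def]
    by (simp only: subtopology_subtopology Int_left_absorb open_restrict_induced_sheaf[OF F A, symmetric]
        zariski_subset[OF YR Y'Y, symmetric] regular_eq_induced_sheaf[OF YR Y'Y, symmetric])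
  then show ?thesis
    using Y'_closed Y by (blast intro: algebraic_set_closedin_zariski)
qed

lemma affine_open_Int_closedin:
  assumes F: "sheaf_of_functions T F" and Z: "closedin T Z" and A: "affine_open T F A"
  shows "affine_open (subtopology T Z) (induced_sheaf T F Z) (A \<inter> Z)"
proof -
  have A_open: "openin T A"
    and FA: "sheaf_of_functions (subtopology T A) (open_restrict F A)"
    and "\<exists>n Y \<phi> \<psi>. algebraic_set n Y \<and>
      ringed_iso (subtopology T A) (open_restrict F A) (zariski n Y) (regular n Y) \<phi> \<psi>"
    using A unfolding affine_open_def affine_variety_def by blast+
  then obtain n Y \<phi> \<psi> where Y: "algebraic_set n Y"
    and iso: "ringed_iso (subtopology T A) (open_restrict F A) (zariski n Y) (regular n Y) \<phi> \<psi>"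
    by blast
  have "sheaf_of_functions (subtopology (subtopology T A) (A \<inter> Z))
      (induced_sheaf (subtopology T A) (open_restrict F A) (A \<inter> Z))"
    by (rule sheaf_of_functions_induced_sheaf[OF FA])
  then have "sheaf_of_functions (subtopology T (A \<inter> Z)) (open_restrict (induced_sheaf T F Z) (A \<inter> Z))"
    by (simp only: subtopology_subtopology Int_left_absorb
        open_restrict_induced_sheaf[OF F A_open, symmetric])
  moreover have "openin (subtopology T Z) (A \<inter> Z)"
    using A_open by (simp add: openin_subtopology_Int)
  ultimately show ?thesis
    using ringed_iso_Int_closedin[OF F A_open Z FA Y iso]
    unfolding affine_open_def affine_variety_def subtopology_subtopology
    by (auto simp: Int_absorb1 Int_commute)
qed

subsection \<open>Schwartz functions\<close>

lemma schwartz_affine_Int_closedin: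
  assumes F: "sheaf_of_functions T F" and Z: "closedin T Z" and A: "affine_open T F A"
    and s: "schwartz_affine (subtopology T A) (open_restrict F A) s"
  shows "schwartz_affine (subtopology (subtopology T Z) (A \<inter> Z))
    (open_restrict (induced_sheaf T F Z) (A \<inter> Z)) s"
proof -
  have A_open: "openin T A"
    and FA: "sheaf_of_functions (subtopology T A) (open_restrict F A)"
    using A unfolding affine_open_def affine_variety_def by blast+
  obtain n Y \<phi> \<psi> g where Y: "algebraic_set n Y"
    and iso: "ringed_iso (subtopology T A) (open_restrict F A) (zariski n Y) (regular n Y) \<phi> \<psi>"
    and g: "schwartz_Rn n g" "\<forall>x\<in>topspace (subtopology T A). s x = g (\<phi> x)"
    using s unfolding schwartz_affine_def by blast
  have "\<forall>x\<in>topspace (subtopology T (A \<inter> Z)). s x = g (\<phi> x)" using g(2) by auto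
  then have "schwartz_affine (subtopology T (A \<inter> Z)) (open_restrict (induced_sheaf T F Z) (A \<inter> Z)) s"
    using ringed_iso_Int_closedin[OF F A_open Z FA Y iso] g(1)
    unfolding schwartz_affine_def by blast
  then show ?thesis by (simp add: subtopology_subtopology Int_commute Int_left_commute)
qed

lemma ext0_sum_ext0:
  "ext0 Z (\<lambda>x. \<Sum>k\<in>I. ext0 (X k) (s k) x) = (\<lambda>x. \<Sum>k\<in>I. ext0 (X k \<inter> Z) (s k) x)"
  by (auto simp: ext0_def fun_eq_iff intro!: sum.cong)

theorem proposition5p3:
  fixes T :: "'a topology" and F :: "'a set \<Rightarrow> ('a \<Rightarrow> real) \<Rightarrow> bool"
    and Z :: "'a set" and s :: "'a \<Rightarrow> real"
  assumes "algebraic_variety T F"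
    and "closedin T Z"
    and "s \<in> schwartz T F"
  shows "ext0 Z s \<in> schwartz (subtopology T Z) (induced_sheaf T F Z)"
proof -
  have F: "sheaf_of_functions T F" using assms(1) by (simp add: algebraic_variety_def)
  obtain I :: "nat set" and X sk where I: "finite I"
    and X: "\<forall>k\<in>I. affine_open T F (X k)" "(\<Union>k\<in>I. X k) = topspace T"
    and sk: "\<forall>k\<in>I. schwartz_affine (subtopology T (X k)) (open_restrict F (X k)) (sk k)"
    and s: "s = (\<lambda>x. \<Sum>k\<in>I. ext0 (X k) (sk k) x)"
    using assms(3) unfolding schwartz_def by blast
  have "\<forall>k\<in>I. affine_open (subtopology T Z) (induced_sheaf T F Z) (X k \<inter> Z)"
    using affine_open_Int_closedin[OF F assms(2)] X(1) by blast
  moreover have "\<forall>k\<in>I. schwartz_affine (subtopology (subtopology T Z) (X k \<inter> Z))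
      (open_restrict (induced_sheaf T F Z) (X k \<inter> Z)) (sk k)"
    using schwartz_affine_Int_closedin[OF F assms(2)] X(1) sk by blast
  moreover have "(\<Union>k\<in>I. X k \<inter> Z) = topspace (subtopology T Z)" using X(2) by auto
  ultimately show ?thesis
    unfolding schwartz_def mem_Collect_eq s ext0_sum_ext0 using I
    by (intro exI[of _ I] exI[of _ "\<lambda>k. X k \<inter> Z"] exI[of _ sk]) blast
qed

end
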